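(* Let $X,Y$ be $n\times n$ positive semidefinite complex matrices and let $Q$ be an $n\times n$ complex matrix with operator norm $\|Q\|_\infty\le 1$. Then for every $t\in(0,\infty)$, \[ 4\,|\operatorname{tr}(QXY)|\le t\,\operatorname{tr}(X^2+Y^2)+\frac{1}{t}\operatorname{tr}(XY+YX). \]
   Context: $\|Q\|_\infty$ denotes the operator (spectral) norm, i.e. the largest singular value of $Q$; $\operatorname{tr}$ denotes the trace. *)

theory Defs
  imports "HOL-Analysis.Analysis" "HOL-Library.Complex_Order"
begin

text \<open>Positive semidefinite complex matrix: v^* X v is a nonnegative real for every v
  (in the order of HOL-Library.Complex_Order, 0 \<le> z means z real and Re z \<ge> 0).\<close>
definition psd_cmat :: "complex^'n^'n \<Rightarrow> bool" where
  "psd_cmat X \<longleftrightarrow> (\<forall>v::complex^'n. 0 \<le> (\<Sum>i\<in>UNIV. cnj (v $ i) * (X *v v) $ i))"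

definition op_norm :: "complex^'n^'n \<Rightarrow> real" where
  "op_norm Q = onorm (\<lambda>v::complex^'n. Q *v v)"

end

theory Submission
  imports Defs
begin

(*
  Write Y = sum_b y_b y_b^* (Cholesky elimination).  Then tr(QXY) = sum_b <Q^* y_b, X y_b>,
  and the Cauchy-Schwarz inequality for the semi-inner product <u, X v> gives
  |tr(QXY)|^2 <= tr(Q X Q^* Y) tr(XY).  As ||Q|| <= 1, the Frobenius norm of Q X Q^* is at
  most that of X, so tr(Q X Q^* Y) <= (||X||_F^2 + ||Y||_F^2)/2 = tr(X^2 + Y^2)/2.  Finally
  4 sqrt(tr(X^2 + Y^2)/2 * tr(XY)) <= t tr(X^2 + Y^2) + (2/t) tr(XY) by AM-GM, and
  tr(XY + YX) = 2 tr(XY).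
*)

definition cinner :: "complex^'n \<Rightarrow> complex^'n \<Rightarrow> complex" where
  "cinner u v = (\<Sum>i\<in>UNIV. cnj (u $ i) * v $ i)"

lemma psd_cmat_iff_cinner: "psd_cmat X \<longleftrightarrow> (\<forall>v. 0 \<le> cinner v (X *v v))"
  by (simp add: psd_cmat_def cinner_def)

lemma complex_nonneg_iff: "0 \<le> (z::complex) \<longleftrightarrow> Im z = 0 \<and> 0 \<le> Re z"
  by (auto simp: less_eq_complex_def)

lemma cinner_add_left: "cinner (u + w) v = cinner u v + cinner w v"
  by (simp add: cinner_def sum.distrib distrib_right)

lemma cinner_add_right: "cinner u (v + w) = cinner u v + cinner u w"
  by (simp add: cinner_def sum.distrib distrib_left)

lemma cinner_diff_right: "cinner u (v - w) = cinner u v - cinner u w"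
  by (simp add: cinner_def sum_subtractf right_diff_distrib)

lemma cinner_scale_left: "cinner (c *s u) v = cnj c * cinner u v"
  by (simp add: cinner_def sum_distrib_left mult_ac)

lemma cinner_scale_right: "cinner u (c *s v) = c * cinner u v"
  by (simp add: cinner_def sum_distrib_left mult_ac)

lemma cinner_commute: "cinner v u = cnj (cinner u v)"
  by (simp add: cinner_def mult_ac)

lemma cinner_axis_left: "cinner (axis i 1) v = v $ i"
proof -
  have "cinner (axis i 1) v = (\<Sum>k\<in>UNIV. if k = i then v $ k else 0)"
    unfolding cinner_def axis_def by (rule sum.cong) auto
  then show ?thesis by simp
qed

lemma matrix_vector_mult_axis: "(A::'a::comm_semiring_1^'n^'m) *v axis j 1 = column j A"
  by (simp add: matrix_mult_sum axis_def column_def if_distrib[of "\<lambda>x. x *s _"] cong: if_cong)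

lemma cinner_mult_cnj: "cinner u v * cinner v u = of_real ((cmod (cinner u v))\<^sup>2)"
  by (metis cinner_commute complex_norm_square)

lemma matrix_entry_eq_cinner: "(A::complex^'n^'n) $ i $ j = cinner (axis i 1) (A *v axis j 1)"
  by (simp add: cinner_axis_left matrix_vector_mult_axis column_def)

lemma cinner_quadratic_expand:
  "cinner (u + c *s v) (X *v (u + c *s v)) =
     cinner u (X *v u) + c * cinner u (X *v v) + cnj c * cinner v (X *v u)
     + cnj c * c * cinner v (X *v v)"
  by (simp add: algebra_simps vector_scalar_commute cinner_add_left cinner_add_right
      cinner_scale_left cinner_scale_right)

lemma psd_cmat_quadratic_form:
  assumes "psd_cmat X"
  shows "Im (cinner v (X *v v)) = 0" and "0 \<le> Re (cinner v (X *v v))"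
  using assms by (simp_all add: psd_cmat_iff_cinner complex_nonneg_iff)

text \<open>Polarization: a sesquilinear form that is real on the diagonal is Hermitian.\<close>
lemma psd_cmat_hermitian:
  assumes "psd_cmat X"
  shows "cinner v (X *v u) = cnj (cinner u (X *v v))"
proof -
  let ?B = "\<lambda>u v. cinner u (X *v v)"
  note real = psd_cmat_quadratic_form(1)[OF assms]
  have "Im (?B u v + ?B v u) = 0"
    using cinner_quadratic_expand[of u 1 v X] real[of u] real[of v] real[of "u + 1 *s v"] by simp
  moreover have "Re (?B u v - ?B v u) = 0"
    using cinner_quadratic_expand[of u \<i> v X] real[of u] real[of v] real[of "u + \<i> *s v"] by simp
  ultimately show ?thesis
    by (simp add: complex_eq_iff)
qed

lemma psd_cmat_entry_cnj: "psd_cmat X \<Longrightarrow> cnj (X $ i $ j) = X $ j $ i"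
  using psd_cmat_hermitian[of X "axis j 1" "axis i 1"] by (simp add: matrix_entry_eq_cinner)

lemma psd_cmat_diagonal_nonneg: "psd_cmat X \<Longrightarrow> 0 \<le> X $ i $ i"
  by (simp add: psd_cmat_iff_cinner matrix_entry_eq_cinner)

lemma le_mult_if_quadratic_nonneg:
  fixes p q m :: real
  assumes "0 \<le> p" "0 \<le> q" and nonneg: "\<And>s. 0 \<le> p - 2 * s * m + s\<^sup>2 * m * q"
  shows "m \<le> p * q"
proof (cases "q = 0")
  case True
  show ?thesis
  proof (rule ccontr)
    assume "\<not> m \<le> p * q"
    then have "0 < m" using True by simp
    then show False
      using nonneg[of "(p + 1) / (2 * m)"] True by simp
  qed
next
  case False
  then have "0 < q" using assms by simp
  have "0 \<le> p - 2 * (1 / q) * m + (1 / q)\<^sup>2 * m * q" by (rule nonneg)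
  also have "\<dots> = p - m / q" using \<open>0 < q\<close> by (simp add: field_simps power2_eq_square)
  finally show ?thesis using \<open>0 < q\<close> by (simp add: field_simps)
qed

lemma psd_cmat_cauchy_schwarz:
  assumes "psd_cmat X"
  shows "(cmod (cinner u (X *v v)))\<^sup>2 \<le> Re (cinner u (X *v u)) * Re (cinner v (X *v v))"
proof -
  let ?B = "\<lambda>u v. cinner u (X *v v)"
  define b where "b = ?B u v"
  note form = psd_cmat_quadratic_form[OF assms]
  show ?thesis unfolding b_def[symmetric]
  proof (rule le_mult_if_quadratic_nonneg)
    show "0 \<le> Re (?B u u)" "0 \<le> Re (?B v v)" using form(2) by auto
    fix s :: real
    define z where "z = u + (- of_real s * cnj b) *s v"
    have "?B z z = ?B u u - 2 * of_real s * (b * cnj b) + (of_real s)\<^sup>2 * (b * cnj b) * ?B v v"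
      unfolding z_def cinner_quadratic_expand psd_cmat_hermitian[OF assms, of v u] b_def[symmetric]
      by (simp add: algebra_simps power2_eq_square)
    also have "b * cnj b = of_real ((cmod b)\<^sup>2)"
      by (rule complex_norm_square[symmetric])
    finally have "Re (?B z z) = Re (?B u u) - 2 * s * (cmod b)\<^sup>2 + s\<^sup>2 * (cmod b)\<^sup>2 * Re (?B v v)"
      by simp
    then show "0 \<le> Re (?B u u) - 2 * s * (cmod b)\<^sup>2 + s\<^sup>2 * (cmod b)\<^sup>2 * Re (?B v v)"
      using form(2)[of z] by simp
  qed
qed

definition outer :: "complex^'n \<Rightarrow> complex^'n^'n" where
  "outer y = (\<chi> i j. y $ i * cnj (y $ j))"

lemma outer_zero [simp]: "outer 0 = 0"
  by (simp add: outer_def vec_eq_iff)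

lemma outer_mult_vector: "outer y *v v = cinner y v *s y"
  by (simp add: outer_def matrix_vector_mult_def cinner_def vec_eq_iff sum_distrib_left mult_ac)

lemma cinner_outer: "cinner v (outer y *v v) = of_real ((cmod (cinner y v))\<^sup>2)"
  by (simp add: outer_mult_vector cinner_scale_right cinner_mult_cnj)

lemma psd_cmat_zero_diagonal:
  assumes "psd_cmat Y" and "Y $ i $ i = 0"
  shows "Y $ i $ k = 0" and "Y $ k $ i = 0"
proof -
  have "(cmod (Y $ i $ k))\<^sup>2 \<le> Re (Y $ i $ i) * Re (Y $ k $ k)"
    using psd_cmat_cauchy_schwarz[OF assms(1), of "axis i 1" "axis k 1"]
    by (simp add: matrix_entry_eq_cinner)
  then show "Y $ i $ k = 0"
    using assms(2) by simp
  then show "Y $ k $ i = 0"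
    using psd_cmat_entry_cnj[OF assms(1), of i k] by simp
qed

text \<open>One step of a Cholesky factorization: subtracting the rank-one matrix built from
  column \<open>i\<close> leaves a Schur complement, which is again positive semidefinite.\<close>
lemma psd_cmat_minus_outer_column:
  assumes psd: "psd_cmat Y" and Yii: "Y $ i $ i = of_real a" and "0 < a"
  shows "psd_cmat (Y - outer (of_real (1 / sqrt a) *s column i Y))"
  unfolding psd_cmat_iff_cinner
proof
  fix v
  let ?y = "of_real (1 / sqrt a) *s column i Y"
  define g where "g = (Y *v v) $ i"
  have cs: "(cmod g)\<^sup>2 \<le> a * Re (cinner v (Y *v v))"
    using psd_cmat_cauchy_schwarz[OF psd, of "axis i 1" v] Yii
    by (simp add: g_def cinner_axis_left matrix_vector_mult_axis column_def)
  have "cinner (column i Y) v = g"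
    using psd_cmat_hermitian[OF psd, of v "axis i 1"]
    by (simp add: g_def cinner_axis_left matrix_vector_mult_axis cinner_commute[of v])
  then have "(cmod (cinner ?y v))\<^sup>2 = (cmod g)\<^sup>2 / a"
    using \<open>0 < a\<close> by (simp add: cinner_scale_left norm_divide power_divide)
  then have "cinner v ((Y - outer ?y) *v v) = cinner v (Y *v v) - of_real ((cmod g)\<^sup>2 / a)"
    by (simp add: matrix_vector_mult_diff_rdistrib cinner_diff_right cinner_outer)
  moreover have "(cmod g)\<^sup>2 / a \<le> Re (cinner v (Y *v v))"
    using cs \<open>0 < a\<close> by (simp add: divide_le_eq mult.commute)
  ultimately show "0 \<le> cinner v ((Y - outer ?y) *v v)"
    using psd_cmat_quadratic_form[OF psd, of v] by (simp add: complex_nonneg_iff)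
qed

lemma outer_scaled_column_entry:
  assumes "psd_cmat Y" and "0 < a"
  shows "outer (of_real (1 / sqrt a) *s column i Y) $ j $ k = Y $ j $ i * Y $ i $ k / of_real a"
proof -
  have "of_real (1 / sqrt a) * of_real (1 / sqrt a) = (1 / of_real a :: complex)"
    using \<open>0 < a\<close> by (simp flip: of_real_mult)
  then show ?thesis
    using psd_cmat_entry_cnj[OF assms(1), of k i]
    by (simp add: outer_def column_def)
qed

lemma psd_cmat_split_outer:
  assumes psd: "psd_cmat Y"
    and supp: "\<And>j k. Y $ j $ k \<noteq> 0 \<Longrightarrow> j \<in> insert i S \<and> k \<in> insert i S"
  obtains y where "psd_cmat (Y - outer y)"
    and "\<And>j k. (Y - outer y) $ j $ k \<noteq> 0 \<Longrightarrow> j \<in> S \<and> k \<in> S"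
proof (cases "Y $ i $ i = 0")
  case True
  then show ?thesis
    using that[of 0] psd supp psd_cmat_zero_diagonal[OF psd True] by fastforce
next
  case False
  define a where "a = Re (Y $ i $ i)"
  have Yii: "Y $ i $ i = of_real a" and "0 < a"
    using psd_cmat_diagonal_nonneg[OF psd, of i] False
    by (auto simp: a_def complex_eq_iff less_eq_complex_def)
  let ?y = "of_real (1 / sqrt a) *s column i Y"
  have entry: "(Y - outer ?y) $ j $ k = Y $ j $ k - Y $ j $ i * Y $ i $ k / of_real a" for j k
    using outer_scaled_column_entry[OF psd \<open>0 < a\<close>] by simp
  have "j \<in> S \<and> k \<in> S" if nonzero: "(Y - outer ?y) $ j $ k \<noteq> 0" for j k
  proof -
    have "j \<noteq> i" and "k \<noteq> i"
      using nonzero \<open>0 < a\<close> unfolding entry by (auto simp: Yii)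
    moreover have "Y $ j $ k \<noteq> 0 \<or> Y $ j $ i \<noteq> 0 \<and> Y $ i $ k \<noteq> 0"
      using nonzero unfolding entry by auto
    ultimately show ?thesis
      using supp by blast
  qed
  then show ?thesis
    using that psd_cmat_minus_outer_column[OF psd Yii \<open>0 < a\<close>] by blast
qed

lemma psd_cmat_sum_outer_on:
  assumes "finite S" and "psd_cmat Y" and "\<And>j k. Y $ j $ k \<noteq> 0 \<Longrightarrow> j \<in> S \<and> k \<in> S"
  shows "\<exists>y. Y = (\<Sum>b\<in>S. outer (y b))"
  using assms
proof (induction S arbitrary: Y rule: finite_induct)
  case empty
  then show ?case
    by (auto simp: vec_eq_iff)
next
  case (insert i S)
  obtain y0 where "psd_cmat (Y - outer y0)"
    and "\<And>j k. (Y - outer y0) $ j $ k \<noteq> 0 \<Longrightarrow> j \<in> S \<and> k \<in> S"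
    using psd_cmat_split_outer[OF insert.prems] by blast
  then obtain y where y: "Y - outer y0 = (\<Sum>b\<in>S. outer (y b))"
    using insert.IH by blast
  have "(\<Sum>b\<in>S. outer ((y(i := y0)) b)) = (\<Sum>b\<in>S. outer (y b))"
    using insert.hyps by (intro sum.cong) auto
  then have "Y = (\<Sum>b\<in>insert i S. outer ((y(i := y0)) b))"
    using insert.hyps y by (simp add: algebra_simps)
  then show ?case by blast
qed

lemma psd_cmat_sum_outer:
  fixes Y :: "complex^'n^'n"
  assumes "psd_cmat Y"
  obtains y :: "'n \<Rightarrow> complex^'n" where "Y = (\<Sum>b\<in>UNIV. outer (y b))"
proof -
  have "\<exists>y :: 'n \<Rightarrow> complex^'n. Y = (\<Sum>b\<in>UNIV. outer (y b))"
    using psd_cmat_sum_outer_on[of UNIV Y] assms by simp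
  then show ?thesis
    using that by blast
qed

definition cadj :: "complex^'m^'n \<Rightarrow> complex^'n^'m" where
  "cadj A = (\<chi> i j. cnj (A $ j $ i))"

lemma cadj_cadj [simp]: "cadj (cadj A) = A"
  by (simp add: cadj_def vec_eq_iff)

lemma cadj_matrix_mult: "cadj (A ** B) = cadj B ** cadj A"
  by (simp add: cadj_def matrix_matrix_mult_def vec_eq_iff mult.commute)

lemma cinner_cadj: "cinner u ((A::complex^'m^'n) *v v) = cinner (cadj A *v u) v"
proof -
  have "cinner u (A *v v) = (\<Sum>i\<in>UNIV. \<Sum>k\<in>UNIV. cnj (u $ i) * A $ i $ k * v $ k)"
    by (simp add: cinner_def matrix_vector_mult_def sum_distrib_left mult_ac)
  also have "\<dots> = (\<Sum>k\<in>UNIV. \<Sum>i\<in>UNIV. cnj (u $ i) * A $ i $ k * v $ k)"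
    by (rule sum.swap)
  also have "\<dots> = cinner (cadj A *v u) v"
    by (simp add: cinner_def cadj_def matrix_vector_mult_def sum_distrib_left sum_distrib_right
        mult_ac)
  finally show ?thesis .
qed

lemma psd_cmat_cadj: "psd_cmat X \<Longrightarrow> cadj X = X"
  by (simp add: cadj_def vec_eq_iff psd_cmat_entry_cnj)

lemma psd_cmat_congruence:
  assumes "psd_cmat X"
  shows "psd_cmat (A ** X ** cadj A)"
  unfolding psd_cmat_iff_cinner
proof
  fix v
  have "cinner v ((A ** X ** cadj A) *v v) = cinner (cadj A *v v) (X *v (cadj A *v v))"
    unfolding matrix_vector_mul_assoc[symmetric] by (rule cinner_cadj)
  then show "0 \<le> cinner v ((A ** X ** cadj A) *v v)"
    using assms by (simp add: psd_cmat_iff_cinner)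
qed

lemma trace_matrix_mult:
  "trace ((A::'a::comm_semiring_1^'n^'m) ** B) = (\<Sum>i\<in>UNIV. \<Sum>k\<in>UNIV. A $ i $ k * B $ k $ i)"
  by (simp add: trace_def matrix_matrix_mult_def)

lemma trace_mult_outer: "trace (A ** outer y) = cinner y (A *v y)"
  by (simp add: trace_matrix_mult outer_def cinner_def matrix_vector_mult_def sum_distrib_left
      mult_ac)

lemma trace_mult_sum_right:
  assumes "finite S"
  shows "trace ((A::'a::comm_semiring_1^'n^'n) ** (\<Sum>b\<in>S. f b)) = (\<Sum>b\<in>S. trace (A ** f b))"
  using assms
proof (induction S rule: finite_induct)
  case empty
  then show ?case by (simp add: trace_def)
next
  case (insert x F)
  then show ?case by (simp add: matrix_add_ldistrib trace_add)
qed

lemma trace_mult_sum_outer: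
  "finite S \<Longrightarrow> trace (A ** (\<Sum>b\<in>S. outer (y b))) = (\<Sum>b\<in>S. cinner (y b) (A *v y b))"
  by (simp add: trace_mult_sum_right trace_mult_outer)

lemma trace_mult_psd_nonneg:
  fixes X Y :: "complex^'n^'n"
  assumes "psd_cmat X" and "psd_cmat Y"
  shows "0 \<le> trace (X ** Y)"
proof -
  obtain y :: "'n \<Rightarrow> complex^'n" where "Y = (\<Sum>b\<in>UNIV. outer (y b))"
    using psd_cmat_sum_outer[OF assms(2)] .
  then show ?thesis
    using assms(1) by (simp add: trace_mult_sum_outer sum_nonneg psd_cmat_iff_cinner)
qed

lemma psd_cmat_sum_cauchy_schwarz:
  assumes "psd_cmat X"
  shows "cmod (\<Sum>b\<in>B. cinner (w b) (X *v y b))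
    \<le> sqrt (\<Sum>b\<in>B. Re (cinner (w b) (X *v w b))) * sqrt (\<Sum>b\<in>B. Re (cinner (y b) (X *v y b)))"
proof -
  define \<alpha> where "\<alpha> b = Re (cinner (w b) (X *v w b))" for b
  define \<beta> where "\<beta> b = Re (cinner (y b) (X *v y b))" for b
  have nonneg: "0 \<le> \<alpha> b" "0 \<le> \<beta> b" for b
    using psd_cmat_quadratic_form(2)[OF assms] by (simp_all add: \<alpha>_def \<beta>_def)
  have "cmod (cinner (w b) (X *v y b)) \<le> \<bar>sqrt (\<alpha> b)\<bar> * \<bar>sqrt (\<beta> b)\<bar>" for b
  proof -
    have "(cmod (cinner (w b) (X *v y b)))\<^sup>2 \<le> \<alpha> b * \<beta> b"
      unfolding \<alpha>_def \<beta>_def by (rule psd_cmat_cauchy_schwarz[OF assms])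
    then have "cmod (cinner (w b) (X *v y b)) \<le> sqrt (\<alpha> b * \<beta> b)"
      by (rule real_le_rsqrt)
    then show ?thesis
      using nonneg by (simp add: real_sqrt_mult)
  qed
  then have "cmod (\<Sum>b\<in>B. cinner (w b) (X *v y b)) \<le> (\<Sum>b\<in>B. \<bar>sqrt (\<alpha> b)\<bar> * \<bar>sqrt (\<beta> b)\<bar>)"
    by (intro order_trans[OF norm_sum] sum_mono)
  also have "\<dots> \<le> L2_set (\<lambda>b. sqrt (\<alpha> b)) B * L2_set (\<lambda>b. sqrt (\<beta> b)) B"
    by (rule L2_set_mult_ineq)
  also have "\<dots> = sqrt (\<Sum>b\<in>B. \<alpha> b) * sqrt (\<Sum>b\<in>B. \<beta> b)"
    using nonneg by (simp add: L2_set_def)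
  finally show ?thesis
    by (simp add: \<alpha>_def \<beta>_def)
qed

lemma trace_cauchy_schwarz:
  fixes X Y Q :: "complex^'n^'n"
  assumes "psd_cmat X" and "psd_cmat Y"
  shows "cmod (trace (Q ** X ** Y))
    \<le> sqrt (Re (trace (Q ** X ** cadj Q ** Y))) * sqrt (Re (trace (X ** Y)))"
proof -
  obtain y :: "'n \<Rightarrow> complex^'n" where Y: "Y = (\<Sum>b\<in>UNIV. outer (y b))"
    using psd_cmat_sum_outer[OF assms(2)] .
  then have trace_Y: "trace (A ** Y) = (\<Sum>b\<in>UNIV. cinner (y b) (A *v y b))" for A
    by (simp add: trace_mult_sum_outer)
  define w where "w b = cadj Q *v y b" for b
  have "trace (Q ** X ** Y) = (\<Sum>b\<in>UNIV. cinner (w b) (X *v y b))"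
    unfolding trace_Y w_def matrix_vector_mul_assoc[symmetric] cinner_cadj ..
  moreover have "trace (Q ** X ** cadj Q ** Y) = (\<Sum>b\<in>UNIV. cinner (w b) (X *v w b))"
    unfolding trace_Y w_def matrix_vector_mul_assoc[symmetric] cinner_cadj ..
  ultimately show ?thesis
    using psd_cmat_sum_cauchy_schwarz[OF assms(1)] by (simp add: trace_Y)
qed

definition frob_norm_sq :: "complex^'m^'n \<Rightarrow> real" where
  "frob_norm_sq A = (\<Sum>i\<in>UNIV. \<Sum>j\<in>UNIV. (cmod (A $ i $ j))\<^sup>2)"

lemma frob_norm_sq_cadj: "frob_norm_sq (cadj A) = frob_norm_sq A"
proof -
  have "frob_norm_sq (cadj A) = (\<Sum>i\<in>UNIV. \<Sum>j\<in>UNIV. (cmod (A $ j $ i))\<^sup>2)"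
    by (simp add: frob_norm_sq_def cadj_def)
  also have "\<dots> = frob_norm_sq A"
    unfolding frob_norm_sq_def by (rule sum.swap)
  finally show ?thesis .
qed

lemma frob_norm_sq_columns: "frob_norm_sq A = (\<Sum>j\<in>UNIV. (norm (column j A))\<^sup>2)"
proof -
  have "(norm (column j A))\<^sup>2 = (\<Sum>i\<in>UNIV. (cmod (A $ i $ j))\<^sup>2)" for j
    by (simp add: norm_vec_def L2_set_def sum_nonneg column_def)
  then have "(\<Sum>j\<in>UNIV. (norm (column j A))\<^sup>2) = (\<Sum>j\<in>UNIV. \<Sum>i\<in>UNIV. (cmod (A $ i $ j))\<^sup>2)"
    by simp
  also have "\<dots> = frob_norm_sq A"
    unfolding frob_norm_sq_def by (rule sum.swap)
  finally show ?thesis ..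
qed

lemma frob_norm_sq_mult_le:
  fixes Q :: "complex^'n^'n" and A :: "complex^'m^'n"
  assumes "op_norm Q \<le> 1"
  shows "frob_norm_sq (Q ** A) \<le> frob_norm_sq A"
proof -
  have "norm (Q *v v) \<le> norm v" for v
  proof -
    have "norm (Q *v v) \<le> op_norm Q * norm v"
      unfolding op_norm_def by (rule onorm) simp
    also have "\<dots> \<le> norm v"
      using mult_right_mono[OF assms norm_ge_zero] by simp
    finally show ?thesis .
  qed
  moreover have "column j (Q ** A) = Q *v column j A" for j
    by (simp add: column_def matrix_matrix_mult_def matrix_vector_mult_def vec_eq_iff)
  ultimately show ?thesis
    unfolding frob_norm_sq_columns by (simp add: sum_mono power_mono)
qed

lemma frob_norm_sq_congruence_le:
  assumes "op_norm Q \<le> 1"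
  shows "frob_norm_sq (Q ** A ** cadj Q) \<le> frob_norm_sq A"
proof -
  have "frob_norm_sq (Q ** (A ** cadj Q)) \<le> frob_norm_sq (A ** cadj Q)"
    by (rule frob_norm_sq_mult_le[OF assms])
  also have "frob_norm_sq (A ** cadj Q) = frob_norm_sq (Q ** cadj A)"
  proof -
    have "cadj (A ** cadj Q) = Q ** cadj A"
      by (simp add: cadj_matrix_mult)
    then show ?thesis
      using frob_norm_sq_cadj[of "A ** cadj Q"] by simp
  qed
  also have "\<dots> \<le> frob_norm_sq (cadj A)"
    by (rule frob_norm_sq_mult_le[OF assms])
  finally show ?thesis
    by (simp add: frob_norm_sq_cadj matrix_mul_assoc)
qed

lemma cmod_trace_mult_le:
  fixes A :: "complex^'m^'n" and B :: "complex^'n^'m"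
  shows "cmod (trace (A ** B)) \<le> (frob_norm_sq A + frob_norm_sq B) / 2"
proof -
  have "cmod (A $ i $ k * B $ k $ i) \<le> ((cmod (A $ i $ k))\<^sup>2 + (cmod (B $ k $ i))\<^sup>2) / 2" for i k
    using sum_squares_bound[of "cmod (A $ i $ k)" "cmod (B $ k $ i)"] by (simp add: norm_mult)
  then have "cmod (trace (A ** B))
      \<le> (\<Sum>i\<in>UNIV. \<Sum>k\<in>UNIV. ((cmod (A $ i $ k))\<^sup>2 + (cmod (B $ k $ i))\<^sup>2) / 2)"
    unfolding trace_matrix_mult by (intro order_trans[OF norm_sum] sum_mono)
  also have "\<dots> = (frob_norm_sq A + (\<Sum>i\<in>UNIV. \<Sum>k\<in>UNIV. (cmod (B $ k $ i))\<^sup>2)) / 2"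
    by (simp add: frob_norm_sq_def sum.distrib add_divide_distrib flip: sum_divide_distrib)
  also have "(\<Sum>i\<in>UNIV. \<Sum>k\<in>UNIV. (cmod (B $ k $ i))\<^sup>2) = frob_norm_sq B"
    unfolding frob_norm_sq_def by (rule sum.swap)
  finally show ?thesis .
qed

lemma trace_hermitian_square:
  assumes "cadj X = X"
  shows "trace (X ** X) = of_real (frob_norm_sq X)"
proof -
  have hermitian: "X $ k $ i = cnj (X $ i $ k)" for i k
  proof -
    have "cnj (X $ i $ k) = cadj X $ k $ i"
      by (simp add: cadj_def)
    then show ?thesis
      using assms by simp
  qed
  have "X $ i $ k * X $ k $ i = of_real ((cmod (X $ i $ k))\<^sup>2)" for i k
    by (simp only: hermitian[where i = i and k = k] complex_norm_square)
  then show ?thesis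
    by (simp add: trace_matrix_mult frob_norm_sq_def)
qed

lemma Re_trace_congruence_mult_le:
  assumes "op_norm Q \<le> 1"
  shows "Re (trace (Q ** X ** cadj Q ** Y)) \<le> (frob_norm_sq X + frob_norm_sq Y) / 2"
proof -
  have "Re (trace (Q ** X ** cadj Q ** Y)) \<le> cmod (trace (Q ** X ** cadj Q ** Y))"
    by (rule complex_Re_le_cmod)
  also have "\<dots> \<le> (frob_norm_sq (Q ** X ** cadj Q) + frob_norm_sq Y) / 2"
    by (rule cmod_trace_mult_le)
  also have "\<dots> \<le> (frob_norm_sq X + frob_norm_sq Y) / 2"
    using frob_norm_sq_congruence_le[OF assms, of X] by simp
  finally show ?thesis .
qed

lemma four_sqrt_mult_le_am_gm:
  fixes R P S t :: real
  assumes "0 \<le> R" and "R \<le> S / 2" and "0 \<le> P" and "0 < t"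
  shows "4 * (sqrt R * sqrt P) \<le> t * S + 2 * P / t"
proof -
  have "4 * (sqrt R * sqrt P) = 2 * sqrt (4 * R * P)"
    using assms by (simp add: real_sqrt_mult)
  also have "\<dots> \<le> 2 * sqrt ((t * S) * (2 * P / t))"
  proof -
    have "4 * R * P \<le> 2 * S * P"
      using mult_right_mono[of "4 * R" "2 * S" P] assms by simp
    also have "\<dots> = (t * S) * (2 * P / t)"
      using assms by simp
    finally show ?thesis
      by simp
  qed
  also have "\<dots> \<le> t * S + 2 * P / t"
    using arith_geo_mean_sqrt[of "t * S" "2 * P / t"] assms by simp
  finally show ?thesis .
qed

theorem lemma2:
  fixes X Y Q :: "complex^'n^'n" and t :: real
  assumes "psd_cmat X" and "psd_cmat Y" and "op_norm Q \<le> 1" and "t > 0"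
  shows "complex_of_real (4 * cmod (trace (Q ** X ** Y)))
           \<le> complex_of_real t * trace (X ** X + Y ** Y)
             + complex_of_real (1 / t) * trace (X ** Y + Y ** X)"
proof -
  define P where "P = Re (trace (X ** Y))"
  define R where "R = Re (trace (Q ** X ** cadj Q ** Y))"
  define S where "S = frob_norm_sq X + frob_norm_sq Y"
  have "0 \<le> trace (X ** Y)"
    by (rule trace_mult_psd_nonneg[OF assms(1,2)])
  then have XY: "trace (X ** Y) = of_real P" and "0 \<le> P"
    by (auto simp: P_def complex_eq_iff less_eq_complex_def)
  have "0 \<le> R"
    using trace_mult_psd_nonneg[OF psd_cmat_congruence[OF assms(1)] assms(2), of Q]
    by (simp add: R_def less_eq_complex_def)
  have "R \<le> S / 2"
    unfolding R_def S_def by (rule Re_trace_congruence_mult_le[OF assms(3)])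
  have "4 * cmod (trace (Q ** X ** Y)) \<le> 4 * (sqrt R * sqrt P)"
    using trace_cauchy_schwarz[OF assms(1,2), of Q] by (simp add: R_def P_def)
  also have "\<dots> \<le> t * S + 2 * P / t"
    by (rule four_sqrt_mult_le_am_gm[OF \<open>0 \<le> R\<close> \<open>R \<le> S / 2\<close> \<open>0 \<le> P\<close> assms(4)])
  finally have "4 * cmod (trace (Q ** X ** Y)) \<le> t * S + 2 * P / t" .
  moreover have "complex_of_real t * trace (X ** X + Y ** Y)
      + complex_of_real (1 / t) * trace (X ** Y + Y ** X) = of_real (t * S + 2 * P / t)"
    by (simp add: trace_add trace_hermitian_square psd_cmat_cadj assms(1,2) trace_mul_sym[of Y X]
        XY S_def)
  ultimately show ?thesis
    by (simp add: less_eq_complex_def)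
qed

end
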